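(* Let $q\geq 0$ and $n\geq 0$. Carole can win (i.e. Paul has no winning strategy in) the $q$-round pathological liar game with $1$ lie and initial state $(n,0)$ provided $$2^q>\begin{cases} n(q+1) & \text{if $n$ is even},\\ n(q+1)-(q-1) & \text{if $n$ is odd}.\end{cases}$$
   Context: Pathological liar game with $1$ lie: a state is a pair $(x_0,x_1)$ of nonnegative integers. In each of $q$ rounds Paul chooses a legal question $(a_0,a_1)$ with integers $0\leq a_i\leq x_i$, and Carole answers Y or N; the new state is $(a_0,\,a_1+x_0-a_0)$ after Y, or $(x_0-a_0,\,x_1-a_1+a_0)$ after N. Paul wins iff after $q$ rounds $x_0+x_1\geq 1$; otherwise Carole wins. *)

theory Defs
  imports Main
begin

definition legal_question :: "nat \<times> nat \<Rightarrow> nat \<times> nat \<Rightarrow> bool" where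
  "legal_question x a \<longleftrightarrow> fst a \<le> fst x \<and> snd a \<le> snd x"

definition yes_state :: "nat \<times> nat \<Rightarrow> nat \<times> nat \<Rightarrow> nat \<times> nat" where
  "yes_state x a = (fst a, snd a + fst x - fst a)"

definition no_state :: "nat \<times> nat \<Rightarrow> nat \<times> nat \<Rightarrow> nat \<times> nat" where
  "no_state x a = (fst x - fst a, snd x - snd a + fst a)"

fun paul_wins :: "nat \<Rightarrow> nat \<times> nat \<Rightarrow> bool" where
  "paul_wins 0 x = (fst x + snd x \<ge> 1)"
| "paul_wins (Suc q) x = (\<exists>a. legal_question x a \<and>
      paul_wins q (yes_state x a) \<and> paul_wins q (no_state x a))"

end

theory Submission
  imports Defs
begin

text \<open>A state \<open>(x\<^sub>0, x\<^sub>1)\<close> with \<open>q\<close> rounds to go has Berlekamp weight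
  \<open>x\<^sub>0 (q + 1) + x\<^sub>1\<close>: the number of answer sequences that keep some candidate alive.
  Every question splits this weight exactly between the two answers, so if it is below \<open>2\<^sup>q\<close>,
  Carole can always choose the answer whose weight is below \<open>2\<^sup>q\<^sup>-\<^sup>1\<close> and ends at weight 0.
  From \<open>(n, 0)\<close> this bound is sharpened by one round: the first question only splits the
  \<open>n\<close> candidates, and Carole takes the side with at most \<open>\<lfloor>n/2\<rfloor>\<close> of them. The two
  cases of the hypothesis are exactly the resulting condition \<open>\<lfloor>n/2\<rfloor> (q - 1) + n < 2\<^sup>q\<^sup>-\<^sup>1\<close>.\<close>

definition weight :: "nat \<Rightarrow> nat \<times> nat \<Rightarrow> nat" where
  "weight q x = fst x * (q + 1) + snd x"

lemma weight_yes_state_no_state: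
  assumes "legal_question x a"
  shows "weight q (yes_state x a) + weight q (no_state x a) = weight (Suc q) x"
proof -
  obtain x0 x1 a0 a1 where xa: "x = (x0, x1)" "a = (a0, a1)" by (cases x, cases a)
  with assms have "a0 \<le> x0" "a1 \<le> x1" by (auto simp: legal_question_def)
  then have "a0 * (q + 1) + (x0 - a0) * (q + 1) = x0 * (q + 1)"
    by (metis add_mult_distrib le_add_diff_inverse)
  with \<open>a0 \<le> x0\<close> \<open>a1 \<le> x1\<close> show ?thesis
    by (simp add: xa weight_def yes_state_def no_state_def)
qed

lemma not_paul_wins_if_weight_less:
  "weight q x < 2 ^ q \<Longrightarrow> \<not> paul_wins q x"
proof (induction q arbitrary: x)
  case 0
  then show ?case by (simp add: weight_def)
next
  case (Suc q)
  show ?case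
  proof
    assume "paul_wins (Suc q) x"
    then obtain a where a: "legal_question x a"
      "paul_wins q (yes_state x a)" "paul_wins q (no_state x a)" by auto
    have "weight q (yes_state x a) + weight q (no_state x a) < 2 * 2 ^ q"
      using weight_yes_state_no_state[OF a(1)] Suc.prems by simp
    then have "weight q (yes_state x a) < 2 ^ q \<or> weight q (no_state x a) < 2 ^ q"
      by linarith
    with Suc.IH a show False by blast
  qed
qed

lemma min_weight_first_answer:
  assumes "legal_question (n, 0) a"
  shows "min (weight p (yes_state (n, 0) a)) (weight p (no_state (n, 0) a))
           \<le> n div 2 * p + n"
proof -
  obtain a0 where a: "a = (a0, 0)" "a0 \<le> n"
    using assms by (cases a) (auto simp: legal_question_def)
  have "weight p (yes_state (n, 0) a) = a0 * p + n"
    using a by (simp add: weight_def yes_state_def algebra_simps)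
  moreover have "weight p (no_state (n, 0) a) = (n - a0) * p + n"
    using a by (simp add: weight_def no_state_def add_mult_distrib2)
  moreover have "min (a0 * p + n) ((n - a0) * p + n) = min a0 (n - a0) * p + n"
    by (simp add: min_def)
  moreover have "min a0 (n - a0) * p + n \<le> n div 2 * p + n"
    by (intro add_right_mono mult_le_mono1) linarith
  ultimately show ?thesis by simp
qed

lemma not_paul_wins_initial_Suc:
  assumes "n div 2 * p + n < 2 ^ p"
  shows "\<not> paul_wins (Suc p) (n, 0)"
proof
  assume "paul_wins (Suc p) (n, 0)"
  then obtain a where a: "legal_question (n, 0) a"
    "paul_wins p (yes_state (n, 0) a)" "paul_wins p (no_state (n, 0) a)" by auto
  have "weight p (yes_state (n, 0) a) < 2 ^ p \<or> weight p (no_state (n, 0) a) < 2 ^ p"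
    using min_weight_first_answer[OF a(1), of p] assms by linarith
  with a show False using not_paul_wins_if_weight_less by blast
qed

theorem lemma11:
  fixes q n :: nat
  assumes "(if even n then 2 ^ q > int n * (int q + 1)
            else 2 ^ q > int n * (int q + 1) - (int q - 1))"
  shows "\<not> paul_wins q (n, 0)"
proof (cases q)
  case 0
  with assms have "n = 0" by (auto split: if_splits)
  with 0 show ?thesis by simp
next
  case (Suc p)
  have "int n * (int q + 1) - (if even n then 0 else int q - 1) = 2 * int (n div 2 * p + n)"
    using Suc by (cases "even n") (auto elim!: evenE oddE simp: algebra_simps)
  with assms Suc have "2 * int (n div 2 * p + n) < 2 * 2 ^ p"
    by (auto split: if_splits)
  then have "int (n div 2 * p + n) < int (2 ^ p)" by (simp only: of_nat_power) simp
  then have "n div 2 * p + n < 2 ^ p" by (simp only: of_nat_less_iff)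
  with Suc show ?thesis using not_paul_wins_initial_Suc by simp
qed

end
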